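(* Let $(W_1,w_2,\lambda)$ be a KKT point (in terms of the B-subdifferential) of the non-convex max-margin problem $\min\frac12(\|W_1\|_F^2+\|w_2\|_2^2)$ s.t. $Y(XW_1)_+w_2\ge\mathbf1$. Then $(W_1,w_2,\lambda)$ yields a KKT point of the convex problem (i.e., there exist $u_j,u'_j\in\mathbb R^d$, $j\in[p]$, with $\sum_jD_jX(u'_j-u_j)=(XW_1)_+w_2$, and $z_j,z'_j\in\mathbb R^N$, which together with $\lambda$ satisfy the convex KKT conditions in the context) if and only if $\lambda$ is dual feasible: $$\max_{u:\|u\|_2\le1}|\lambda^T(Xu)_+|\le1.$$ Moreover, this dual feasibility condition is equivalent to: for every $D_j\in\mathcal P$, $$\max_{\|u\|_2\le1,\ (2D_j-I)Xu\ge0}|\lambda^TD_jXu|\le1.$$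
   Context: Binary setting: $X\in\mathbb R^{N\times d}$ rows $x_n$, $y\in\{\pm1\}^N$, $Y=\mathrm{diag}(y)$, network output $(XW_1)_+w_2$, $\mathcal P=\{\mathrm{diag}(\mathbb I(Xw\ge0)):w\in\mathbb R^d\}=\{D_1,\dots,D_p\}$. KKT point of the non-convex problem (B-subdifferential): $Y\lambda\ge0$, $Y(XW_1)_+w_2\ge\mathbf 1$, $\lambda_n(y_n(x_n^TW_1)_+w_2-1)=0$, $w_2=(XW_1)_+^T\lambda$, and for each $i$, $w_{1,i}=w_{2,i}\sum_n\lambda_ng_{n,i}x_n$ with $g_{n,i}=1$ if $x_n^Tw_{1,i}>0$, $0$ if $<0$, $\in\{0,1\}$ if $=0$. Convex problem: $\min\sum_{j=1}^p(\|u_j\|_2+\|u'_j\|_2)$ s.t. $Y\sum_jD_jX(u'_j-u_j)\ge\mathbf1$, $(2D_j-I)Xu_j\ge0$, $(2D_j-I)Xu'_j\ge0$. Its KKT conditions, with multipliers $\lambda$ ($Y\lambda\ge0$) and $z_j,z'_j\ge0$: primal feasibility; $X^TD_j\lambda+X^T(2D_j-I)z'_j\in\partial\|u'_j\|_2$ and $-X^TD_j\lambda+X^T(2D_j-I)z_j\in\partial\|u_j\|_2$ for all $j$; $\lambda_n\big(y_n(\sum_jD_jX(u'_j-u_j))_n-1\big)=0$; $z_{j,n}((2D_j-I)Xu_j)_n=0$ and $z'_{j,n}((2D_j-I)Xu'_j)_n=0$ for all $j,n$. *)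

theory Defs
  imports "HOL-Analysis.Analysis"
begin

text \<open>Dimensions are finite index types: 'n samples (N), 'd features (d), 'm hidden neurons.
  X :: real^'d^'n has rows x_n = X$n; W1 :: real^'m^'d; w2 :: real^'m; y, lambda :: real^'n.\<close>

definition diag_mat :: "real^'n \<Rightarrow> real^'n^'n" where
  "diag_mat v = (\<chi> i j. if i = j then v $ i else 0)"

definition relu_mat :: "real^'m^'n \<Rightarrow> real^'m^'n" where
  "relu_mat A = (\<chi> i j. max 0 (A $ i $ j))"

definition relu_vec :: "real^'n \<Rightarrow> real^'n" where
  "relu_vec v = (\<chi> i. max 0 (v $ i))"

definition arrangements :: "real^'d^'n \<Rightarrow> (real^'n^'n) set" where
  "arrangements X = {diag_mat (\<chi> n. if (X *v w) $ n \<ge> 0 then 1 else 0) | w. True}"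

definition subdiff :: "('a::real_inner \<Rightarrow> real) \<Rightarrow> 'a \<Rightarrow> 'a set" where
  "subdiff f x = {g. \<forall>z. f z \<ge> f x + g \<bullet> (z - x)}"

text \<open>KKT point (B-subdifferential) of the non-convex max-margin problem
  min 1/2(||W1||_F^2 + ||w2||^2) s.t. Y (X W1)_+ w2 >= 1.\<close>
definition nonconvex_KKT ::
  "real^'d^'n \<Rightarrow> real^'n \<Rightarrow> real^'m^'d \<Rightarrow> real^'m \<Rightarrow> real^'n \<Rightarrow> bool" where
  "nonconvex_KKT X y W1 w2 lam \<longleftrightarrow>
     (\<forall>n. (diag_mat y *v lam) $ n \<ge> 0)
   \<and> (\<forall>n. (diag_mat y *v (relu_mat (X ** W1) *v w2)) $ n \<ge> 1)
   \<and> (\<forall>n. lam $ n * (y $ n * ((relu_mat (X ** W1)) $ n \<bullet> w2) - 1) = 0)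
   \<and> w2 = transpose (relu_mat (X ** W1)) *v lam
   \<and> (\<forall>i. \<exists>g :: 'n \<Rightarrow> real.
          (\<forall>n. (X $ n \<bullet> column i W1 > 0 \<longrightarrow> g n = 1)
             \<and> (X $ n \<bullet> column i W1 < 0 \<longrightarrow> g n = 0)
             \<and> (X $ n \<bullet> column i W1 = 0 \<longrightarrow> g n \<in> {0, 1}))
        \<and> column i W1 = w2 $ i *\<^sub>R (\<Sum>n\<in>UNIV. (lam $ n * g n) *\<^sub>R X $ n))"

text \<open>KKT conditions of the convex problem
  min sum_j (||u_j|| + ||u'_j||) s.t. Y sum_j D_j X (u'_j - u_j) >= 1,
  (2D_j - I) X u_j >= 0, (2D_j - I) X u'_j >= 0, with the index j ranging over
  the (distinct) matrices D_j of P, multipliers lam (Y lam >= 0) and z_j, z'_j >= 0.\<close>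
definition convex_KKT ::
  "real^'d^'n \<Rightarrow> real^'n \<Rightarrow> (real^'n^'n \<Rightarrow> real^'d) \<Rightarrow> (real^'n^'n \<Rightarrow> real^'d)
   \<Rightarrow> (real^'n^'n \<Rightarrow> real^'n) \<Rightarrow> (real^'n^'n \<Rightarrow> real^'n) \<Rightarrow> real^'n \<Rightarrow> bool" where
  "convex_KKT X y u u' z z' lam \<longleftrightarrow>
     (let P = arrangements X;
          out = (\<Sum>D\<in>P. (D ** X) *v (u' D - u D)) in
       (\<forall>n. (diag_mat y *v out) $ n \<ge> 1)
     \<and> (\<forall>D\<in>P. \<forall>n. (((2::real) *\<^sub>R D - mat 1) ** X *v u D) $ n \<ge> 0)
     \<and> (\<forall>D\<in>P. \<forall>n. (((2::real) *\<^sub>R D - mat 1) ** X *v u' D) $ n \<ge> 0)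
     \<and> (\<forall>n. (diag_mat y *v lam) $ n \<ge> 0)
     \<and> (\<forall>D\<in>P. \<forall>n. z D $ n \<ge> 0 \<and> z' D $ n \<ge> 0)
     \<and> (\<forall>D\<in>P. transpose X *v (D *v lam) + transpose X *v (((2::real) *\<^sub>R D - mat 1) *v z' D)
                 \<in> subdiff norm (u' D))
     \<and> (\<forall>D\<in>P. - (transpose X *v (D *v lam)) + transpose X *v (((2::real) *\<^sub>R D - mat 1) *v z D)
                 \<in> subdiff norm (u D))
     \<and> (\<forall>n. lam $ n * (y $ n * out $ n - 1) = 0)
     \<and> (\<forall>D\<in>P. \<forall>n. z D $ n * ((((2::real) *\<^sub>R D - mat 1) ** X *v u D) $ n) = 0)
     \<and> (\<forall>D\<in>P. \<forall>n. z' D $ n * ((((2::real) *\<^sub>R D - mat 1) ** X *v u' D) $ n) = 0))"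

end

theory Submission
  imports Defs
begin

text \<open>Stationarity of the convex problem in block \<open>D\<close> asks that \<open>\<plusminus>X\<^sup>T D \<lambda>\<close> lie within distance 1
  of the cone \<open>{X\<^sup>T (2D - I) z | z \<ge> 0}\<close>. By conic duality this is the bound
  \<open>|\<lambda>\<^sup>T D X u| \<le> 1\<close> on the unit ball intersected with the cone \<open>(2D - I) X u \<ge> 0\<close>, where
  \<open>D X u = (X u)\<^sub>+\<close>; as every \<open>u\<close> lies in the cone of its own activation pattern, these bounds
  together are dual feasibility. Conversely, under dual feasibility the convex variables are
  obtained by grouping the hidden neurons by activation pattern. Stationarity of the non-convex
  problem makes every neuron balanced, \<open>\<parallel>w\<^sub>1\<^sub>,\<^sub>i\<parallel> = |w\<^sub>2\<^sub>,\<^sub>i|\<close>, and aligned,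
  \<open>\<lambda>\<^sup>T (X w\<^sub>1\<^sub>,\<^sub>i)\<^sub>+ = w\<^sub>2\<^sub>,\<^sub>i\<close>, which yields the subgradient and complementarity conditions.\<close>

abbreviation sign_mat :: "real^'n^'n \<Rightarrow> real^'n^'n" where
  "sign_mat D \<equiv> (2::real) *\<^sub>R D - mat 1"

lemma inner_transpose_mult: "(transpose A *v z) \<bullet> u = z \<bullet> (A *v u)"
  for A :: "real^'d^'n"
  by (simp add: dot_lmul_matrix)

lemma transpose_mult_symmetric:
  "transpose S = S \<Longrightarrow> transpose (S ** X) *v z = transpose X *v (S *v z)"
  for S :: "real^'n^'n" and X :: "real^'d^'n"
  by (simp add: matrix_transpose_mul flip: matrix_vector_mul_assoc)

lemma diag_mat_mult_vec: "diag_mat v *v x = (\<chi> n. v $ n * x $ n)"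
  by (simp add: diag_mat_def matrix_vector_mult_def vec_eq_iff if_distrib[where f = "\<lambda>a. a * _"]
      cong: if_cong)

lemma sign_diag_mat_mult_vec: "sign_mat (diag_mat v) *v x = (\<chi> n. (2 * v $ n - 1) * x $ n)"
  by (simp add: scaleR_matrix_vector_assoc[symmetric] diag_mat_mult_vec vec_eq_iff algebra_simps)

lemma transpose_diag_mat: "transpose (diag_mat v) = diag_mat v"
  by (simp add: diag_mat_def transpose_def vec_eq_iff)

lemma transpose_sign_diag_mat: "transpose (sign_mat (diag_mat v)) = sign_mat (diag_mat v)"
  by (simp add: diag_mat_def transpose_def vec_eq_iff mat_def)

definition activation_pattern :: "real^'d^'n \<Rightarrow> real^'d \<Rightarrow> real^'n^'n" where
  "activation_pattern X w = diag_mat (\<chi> n. if 0 \<le> (X *v w) $ n then 1 else 0)"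

lemma arrangements_eq_range: "arrangements X = range (activation_pattern X)"
  by (auto simp: arrangements_def activation_pattern_def)

lemma finite_arrangements: "finite (arrangements (X :: real^'d^'n))"
proof (rule finite_subset)
  show "arrangements X \<subseteq> range (\<lambda>S :: 'n set. diag_mat (\<chi> n. if n \<in> S then 1 else 0))"
    by (auto simp: arrangements_eq_range activation_pattern_def
        intro!: image_eqI[where x = "{n. 0 \<le> (X *v _) $ n}"])
qed simp

lemma arrangements_diag_01:
  assumes "D \<in> arrangements X"
  obtains v where "D = diag_mat v" "\<forall>n. v $ n = 0 \<or> v $ n = 1"
  using assms by (auto simp: arrangements_eq_range activation_pattern_def)

lemma transpose_arrangement:
  "D \<in> arrangements X \<Longrightarrow> transpose D = D \<and> transpose (sign_mat D) = sign_mat D"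
  by (metis arrangements_diag_01 transpose_diag_mat transpose_sign_diag_mat)

lemma arrangement_mult_eq_relu:
  assumes "D \<in> arrangements X" and "\<forall>n. 0 \<le> (sign_mat D ** X *v u) $ n"
  shows "(D ** X) *v u = relu_vec (X *v u)"
proof -
  obtain v where v: "D = diag_mat v" "\<forall>n. v $ n = 0 \<or> v $ n = 1"
    using assms(1) by (rule arrangements_diag_01)
  have "v $ n * (X *v u) $ n = max 0 ((X *v u) $ n)" for n
  proof -
    have "0 \<le> (2 * v $ n - 1) * (X *v u) $ n"
      using assms(2) by (simp add: v sign_diag_mat_mult_vec flip: matrix_vector_mul_assoc)
    with v(2) show ?thesis
      by (cases "v $ n = 0") (auto simp: max_def)
  qed
  then show ?thesis
    by (simp add: v vec_eq_iff diag_mat_mult_vec relu_vec_def flip: matrix_vector_mul_assoc)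
qed

lemma activation_pattern_cone:
  "\<forall>n. 0 \<le> (sign_mat (activation_pattern X w) ** X *v w) $ n"
  by (simp add: activation_pattern_def matrix_vector_mul_assoc[symmetric] sign_diag_mat_mult_vec)

lemma activation_pattern_mult_eq_relu:
  "(activation_pattern X w ** X) *v w = relu_vec (X *v w)"
  by (rule arrangement_mult_eq_relu[OF _ activation_pattern_cone])
    (simp add: arrangements_eq_range)

lemma dual_feasible_iff_arrangement_bounds:
  fixes X :: "real^'d^'n" and lam :: "real^'n"
  shows "(\<forall>u. norm u \<le> 1 \<longrightarrow> \<bar>lam \<bullet> relu_vec (X *v u)\<bar> \<le> 1)
     \<longleftrightarrow> (\<forall>D\<in>arrangements X. \<forall>u. norm u \<le> 1 \<and> (\<forall>n. 0 \<le> (sign_mat D ** X *v u) $ n)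
            \<longrightarrow> \<bar>lam \<bullet> ((D ** X) *v u)\<bar> \<le> 1)"
proof (intro iffI ballI allI impI)
  fix D u
  assume "\<forall>u. norm u \<le> 1 \<longrightarrow> \<bar>lam \<bullet> relu_vec (X *v u)\<bar> \<le> 1" and "D \<in> arrangements X"
    and "norm u \<le> 1 \<and> (\<forall>n. 0 \<le> (sign_mat D ** X *v u) $ n)"
  then show "\<bar>lam \<bullet> ((D ** X) *v u)\<bar> \<le> 1"
    by (simp add: arrangement_mult_eq_relu)
next
  fix u :: "real^'d"
  assume "\<forall>D\<in>arrangements X. \<forall>u. norm u \<le> 1 \<and> (\<forall>n. 0 \<le> (sign_mat D ** X *v u) $ n)
            \<longrightarrow> \<bar>lam \<bullet> ((D ** X) *v u)\<bar> \<le> 1" and "norm u \<le> 1"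
  then show "\<bar>lam \<bullet> relu_vec (X *v u)\<bar> \<le> 1"
    using activation_pattern_cone[of X u]
    by (auto simp: arrangements_eq_range simp flip: activation_pattern_mult_eq_relu)
qed

lemma subdiff_norm_iff: "s \<in> subdiff norm u \<longleftrightarrow> norm s \<le> 1 \<and> s \<bullet> u = norm u"
  for s u :: "'a::real_inner"
proof
  assume s: "s \<in> subdiff norm u"
  have "norm u + s \<bullet> s \<le> norm (u + s)"
    using s[unfolded subdiff_def, simplified, rule_format, of "u + s"] by simp
  also have "\<dots> \<le> norm u + norm s" by (rule norm_triangle_ineq)
  finally have "norm s * norm s \<le> norm s * 1"
    by (simp add: power2_norm_eq_inner[symmetric] power2_eq_square)
  then have ns: "norm s \<le> 1"
    by (cases "norm s = 0") (auto simp: mult_le_cancel_left)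
  have "norm u + s \<bullet> (z - u) \<le> norm z" for z
    using s unfolding subdiff_def by simp
  from this[of 0] this[of "2 *\<^sub>R u"] have "s \<bullet> u = norm u" by (simp add: algebra_simps)
  with ns show "norm s \<le> 1 \<and> s \<bullet> u = norm u" ..
next
  assume s: "norm s \<le> 1 \<and> s \<bullet> u = norm u"
  have "s \<bullet> z \<le> norm z" for z
    using norm_cauchy_schwarz[of s z] s mult_left_le_one_le[of "norm z" "norm s"] by simp
  with s show "s \<in> subdiff norm u"
    by (simp add: subdiff_def inner_diff_right)
qed

lemma closest_point_convex_cone:
  fixes C :: "'a::euclidean_space set" and x :: 'a
  assumes "closed C" and "convex_cone C"
  defines "k \<equiv> closest_point C x"
  shows "k \<in> C" and "(x - k) \<bullet> k = 0" and "\<forall>y\<in>C. (x - k) \<bullet> y \<le> 0"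
proof -
  have "C \<noteq> {}" using assms(2) convex_cone_nonempty by blast
  then show k: "k \<in> C" unfolding k_def by (rule closest_point_in_set[OF assms(1)])
  have "convex C" using assms(2) by (simp add: convex_cone_def)
  have obtuse: "(x - k) \<bullet> (y - k) \<le> 0" if "y \<in> C" for y
    using closest_point_exists(2)[OF assms(1) \<open>C \<noteq> {}\<close>]
    by (intro any_closest_point_dot[OF \<open>convex C\<close> assms(1) k that]) (simp add: k_def)
  have "0 \<in> C" and "2 *\<^sub>R k \<in> C"
    using assms(2) k by (auto simp: convex_cone_iff)
  from obtuse[OF this(1)] obtuse[OF this(2)] show "(x - k) \<bullet> k = 0"
    by (simp add: algebra_simps)
  with obtuse show "\<forall>y\<in>C. (x - k) \<bullet> y \<le> 0"
    by (simp add: inner_diff_right)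
qed

text \<open>For the nontrivial direction project \<open>-c\<close> onto the cone \<open>K\<close> generated by the
  rows of \<open>A\<close>, at \<open>k = A\<^sup>T z\<close>: the residual \<open>r = c + k\<close> satisfies \<open>Ar \<ge> 0\<close> and
  \<open>c\<^sup>T r = \<parallel>r\<parallel>\<^sup>2\<close>, so testing the bound at \<open>u = r / \<parallel>r\<parallel>\<close> gives \<open>\<parallel>r\<parallel> \<le> 1\<close>.\<close>
lemma cone_unit_ball_bound_iff:
  fixes A :: "real^'d^'n" and c :: "real^'d"
  shows "(\<forall>u. norm u \<le> 1 \<and> (\<forall>n. 0 \<le> (A *v u) $ n) \<longrightarrow> c \<bullet> u \<le> 1)
     \<longleftrightarrow> (\<exists>z. (\<forall>n. 0 \<le> z $ n) \<and> norm (c + transpose A *v z) \<le> 1)"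
proof
  assume bound: "\<forall>u. norm u \<le> 1 \<and> (\<forall>n. 0 \<le> (A *v u) $ n) \<longrightarrow> c \<bullet> u \<le> 1"
  define K where "K = convex_cone hull range (\<lambda>n. transpose A *v axis n (1::real))"
  define k where "k = closest_point K (- c)"
  define r where "r = c + k"
  have K_closed: "closed K" and K_cone: "convex_cone K"
    unfolding K_def by (simp_all add: closed_convex_cone_hull convex_cone_convex_cone_hull)
  have "k \<in> K" and rk: "r \<bullet> k = 0" and rK: "\<forall>y\<in>K. 0 \<le> r \<bullet> y"
    using closest_point_convex_cone[OF K_closed K_cone, of "- c"]
    by (auto simp: k_def r_def algebra_simps)
  have "K \<subseteq> (\<lambda>z. transpose A *v z) ` {z. \<forall>n. 0 \<le> z $ n}"
    unfolding K_def
  proof (rule hull_minimal)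
    show "range (\<lambda>n. transpose A *v axis n 1) \<subseteq> (\<lambda>z. transpose A *v z) ` {z. \<forall>n. 0 \<le> z $ n}"
      by (auto simp: axis_def)
    show "convex_cone ((\<lambda>z. transpose A *v z) ` {z. \<forall>n. 0 \<le> z $ n})"
      by (intro convex_cone_linear_image conjI matrix_vector_mul_linear)
        (simp add: convex_cone_iff)
  qed
  with \<open>k \<in> K\<close> obtain z where z: "\<forall>n. 0 \<le> z $ n" "k = transpose A *v z" by auto
  have "0 \<le> (A *v r) $ n" for n
  proof -
    have "transpose A *v axis n 1 \<in> K" unfolding K_def by (rule hull_inc) simp
    then have "0 \<le> r \<bullet> (transpose A *v axis n 1)" using rK by blast
    also have "\<dots> = (A *v r) $ n"
      by (metis inner_commute inner_transpose_mult inner_axis' inner_real_def mult_1)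
    finally show ?thesis .
  qed
  moreover have "c \<bullet> r = norm r ^ 2"
    using rk by (simp add: r_def power2_norm_eq_inner algebra_simps inner_commute)
  ultimately have "norm r \<le> 1"
    using bound[rule_format, of "r /\<^sub>R norm r"]
    by (cases "r = 0") (auto simp: matrix_vector_mult_scaleR power2_eq_square field_simps)
  with z show "\<exists>z. (\<forall>n. 0 \<le> z $ n) \<and> norm (c + transpose A *v z) \<le> 1"
    unfolding r_def by blast
next
  assume "\<exists>z. (\<forall>n. 0 \<le> z $ n) \<and> norm (c + transpose A *v z) \<le> 1"
  then obtain z where z: "\<forall>n. 0 \<le> z $ n" "norm (c + transpose A *v z) \<le> 1" by blast
  show "\<forall>u. norm u \<le> 1 \<and> (\<forall>n. 0 \<le> (A *v u) $ n) \<longrightarrow> c \<bullet> u \<le> 1"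
  proof (intro allI impI)
    fix u :: "real^'d" assume u: "norm u \<le> 1 \<and> (\<forall>n. 0 \<le> (A *v u) $ n)"
    have "0 \<le> z \<bullet> (A *v u)"
      using z u by (simp add: inner_vec_def sum_nonneg)
    moreover have "(c + transpose A *v z) \<bullet> u \<le> norm (c + transpose A *v z) * norm u"
      by (rule norm_cauchy_schwarz)
    moreover have "\<dots> \<le> 1" using z(2) u by (simp add: mult_le_one)
    ultimately show "c \<bullet> u \<le> 1"
      by (simp only: inner_add_left inner_transpose_mult)
  qed
qed

lemma relu_mat_mult_column: "relu_mat (X ** W) $ n $ i = relu_vec (X *v column i W) $ n"
  by (simp add: relu_mat_def relu_vec_def matrix_matrix_mult_def matrix_vector_mult_def column_def)

lemma relu_mat_mult_vec_eq_sum: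
  "relu_mat (X ** W) *v w = (\<Sum>i\<in>UNIV. w $ i *\<^sub>R relu_vec (X *v column i W))"
  by (simp add: vec_eq_iff matrix_vector_mult_def relu_mat_mult_column mult.commute)

lemma transpose_relu_mat_mult_component:
  "(transpose (relu_mat (X ** W)) *v lam) $ i = lam \<bullet> relu_vec (X *v column i W)"
  by (simp add: transpose_def matrix_vector_mult_def relu_mat_mult_column inner_vec_def mult.commute)

lemma inner_transpose_symmetric_mult:
  "transpose D = D \<Longrightarrow> (transpose X *v (D *v lam)) \<bullet> u = lam \<bullet> ((D ** X) *v u)"
  for D :: "real^'n^'n" and X :: "real^'d^'n"
  by (metis inner_transpose_mult transpose_mult_symmetric)

lemma inner_activation_pattern_mult:
  "(transpose X *v (activation_pattern X w *v lam)) \<bullet> w = lam \<bullet> relu_vec (X *v w)"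
proof -
  have "transpose (activation_pattern X w) = activation_pattern X w"
    by (simp add: activation_pattern_def transpose_diag_mat)
  then show ?thesis
    by (simp only: inner_transpose_symmetric_mult activation_pattern_mult_eq_relu)
qed

text \<open>Stationarity in \<open>W\<^sub>1\<close> makes each hidden neuron balanced:
  \<open>\<parallel>w\<^sub>1\<^sub>,\<^sub>i\<parallel>\<^sup>2 = w\<^sub>2\<^sub>,\<^sub>i \<lambda>\<^sup>T(Xw\<^sub>1\<^sub>,\<^sub>i)\<^sub>+ = w\<^sub>2\<^sub>,\<^sub>i\<^sup>2\<close>.\<close>
lemma nonconvex_KKT_norm_column:
  assumes "nonconvex_KKT X y W1 w2 lam"
  shows "norm (column i W1) = \<bar>w2 $ i\<bar>"
proof -
  define c where "c = column i W1"
  obtain g where g: "\<forall>n. (X $ n \<bullet> c > 0 \<longrightarrow> g n = 1) \<and> (X $ n \<bullet> c < 0 \<longrightarrow> g n = 0)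
        \<and> (X $ n \<bullet> c = 0 \<longrightarrow> g n \<in> {0, 1})"
    and c: "c = w2 $ i *\<^sub>R (\<Sum>n\<in>UNIV. (lam $ n * g n) *\<^sub>R X $ n)"
    using assms unfolding nonconvex_KKT_def c_def by blast
  have gx: "g n * (X $ n \<bullet> c) = max 0 ((X *v c) $ n)" for n
    using g[rule_format, of n] by (auto simp: matrix_vector_mul_component max_def)
  have "c \<bullet> c = w2 $ i * (\<Sum>n\<in>UNIV. lam $ n * (g n * (X $ n \<bullet> c)))"
    by (subst (1) c) (simp add: inner_sum_left mult.assoc)
  also have "\<dots> = w2 $ i * (lam \<bullet> relu_vec (X *v c))"
    unfolding gx by (simp add: inner_vec_def relu_vec_def)
  also have "\<dots> = (w2 $ i)\<^sup>2"
    using assms transpose_relu_mat_mult_component[of X W1 lam i]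
    by (simp add: nonconvex_KKT_def c_def power2_eq_square)
  finally have "(norm c)\<^sup>2 = \<bar>w2 $ i\<bar>\<^sup>2"
    by (simp add: power2_norm_eq_inner)
  then show ?thesis
    unfolding c_def[symmetric] by (rule power2_eq_imp_eq) simp_all
qed

lemma nonneg_inner_eq_0_imp_componentwise:
  fixes z v :: "real^'n"
  assumes "\<forall>n. 0 \<le> z $ n" and "\<forall>n. 0 \<le> v $ n" and "z \<bullet> v \<le> 0"
  shows "z $ n * v $ n = 0"
  using assms sum_nonneg_eq_0_iff[of UNIV "\<lambda>n. z $ n * v $ n"] sum_nonneg[of UNIV "\<lambda>n. z $ n * v $ n"]
  by (simp add: inner_vec_def)

lemma subdiff_norm_nonneg_sum:
  fixes w :: "'i \<Rightarrow> 'a::real_inner"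
  assumes "finite I" and "norm s \<le> 1"
    and "\<forall>i\<in>I. s \<bullet> w i = norm (w i)" and "\<forall>i\<in>I. 0 \<le> a i"
  shows "s \<in> subdiff norm (\<Sum>i\<in>I. a i *\<^sub>R w i)"
proof -
  let ?u = "\<Sum>i\<in>I. a i *\<^sub>R w i"
  have "norm ?u \<le> (\<Sum>i\<in>I. a i * norm (w i))"
    using norm_sum[of "\<lambda>i. a i *\<^sub>R w i" I] assms(4) by simp
  also have "\<dots> = s \<bullet> ?u"
    using assms(3) by (simp add: inner_sum_right)
  finally have "norm ?u \<le> s \<bullet> ?u" .
  moreover have "s \<bullet> ?u \<le> norm s * norm ?u" by (rule norm_cauchy_schwarz)
  moreover have "\<dots> \<le> norm ?u" using assms(2) by (simp add: mult_left_le_one_le)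
  ultimately show ?thesis
    using assms(2) by (simp add: subdiff_norm_iff)
qed

text \<open>Alignment forces complementarity:
  \<open>\<parallel>w\<^sub>i\<parallel> + z\<^sup>T A w\<^sub>i = (c + A\<^sup>T z)\<^sup>T w\<^sub>i \<le> \<parallel>w\<^sub>i\<parallel>\<close> while \<open>z, A w\<^sub>i \<ge> 0\<close>.\<close>
lemma cone_combination_KKT:
  fixes A :: "real^'d^'n" and w :: "'i \<Rightarrow> real^'d"
  assumes "finite I" and s: "norm (c + transpose A *v z) \<le> 1" and z: "\<forall>n. 0 \<le> z $ n"
    and cone: "\<forall>i\<in>I. \<forall>n. 0 \<le> (A *v w i) $ n" and aligned: "\<forall>i\<in>I. c \<bullet> w i = norm (w i)"
    and a: "\<forall>i\<in>I. 0 \<le> a i"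
  defines "u \<equiv> \<Sum>i\<in>I. a i *\<^sub>R w i"
  shows "c + transpose A *v z \<in> subdiff norm u"
    and "\<forall>n. 0 \<le> (A *v u) $ n"
    and "\<forall>n. z $ n * (A *v u) $ n = 0"
proof -
  have split: "(c + transpose A *v z) \<bullet> w i = norm (w i) + z \<bullet> (A *v w i)" if "i \<in> I" for i
    using aligned that by (simp only: inner_add_left inner_transpose_mult)
  have "z \<bullet> (A *v w i) \<le> 0" if "i \<in> I" for i
  proof -
    have "(c + transpose A *v z) \<bullet> w i \<le> norm (c + transpose A *v z) * norm (w i)"
      by (rule norm_cauchy_schwarz)
    also have "\<dots> \<le> norm (w i)" using s by (simp add: mult_left_le_one_le)
    finally show ?thesis using split[OF that] by simp
  qed
  then have compl: "\<forall>i\<in>I. \<forall>n. z $ n * (A *v w i) $ n = 0"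
    using z cone nonneg_inner_eq_0_imp_componentwise by blast
  then have "\<forall>i\<in>I. z \<bullet> (A *v w i) = 0"
    unfolding inner_vec_def by (auto intro!: sum.neutral)
  then show "c + transpose A *v z \<in> subdiff norm u"
    unfolding u_def using split by (intro subdiff_norm_nonneg_sum assms) simp_all
  have Au: "(A *v u) $ n = (\<Sum>i\<in>I. a i * (A *v w i) $ n)" for n
    by (simp add: u_def vec.sum matrix_vector_mult_scaleR)
  show "\<forall>n. 0 \<le> (A *v u) $ n"
    using cone a by (simp add: Au sum_nonneg)
  show "\<forall>n. z $ n * (A *v u) $ n = 0"
    using compl by (auto simp: Au sum_distrib_left mult.left_commute intro!: sum.neutral)
qed

lemma arrangement_bound_iff_dual_certificate:
  fixes X :: "real^'d^'n" and lam :: "real^'n"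
  assumes "D \<in> arrangements X"
  shows "(\<forall>u. norm u \<le> 1 \<and> (\<forall>n. 0 \<le> (sign_mat D ** X *v u) $ n) \<longrightarrow> \<bar>lam \<bullet> ((D ** X) *v u)\<bar> \<le> 1)
     \<longleftrightarrow> (\<exists>z. (\<forall>n. 0 \<le> z $ n)
            \<and> norm (transpose X *v (D *v lam) + transpose X *v (sign_mat D *v z)) \<le> 1)
       \<and> (\<exists>z. (\<forall>n. 0 \<le> z $ n)
            \<and> norm (- (transpose X *v (D *v lam)) + transpose X *v (sign_mat D *v z)) \<le> 1)"
proof -
  have "transpose D = D" and sym: "transpose (sign_mat D) = sign_mat D"
    using transpose_arrangement[OF assms] by simp_all
  then have "lam \<bullet> ((D ** X) *v u) = (transpose X *v (D *v lam)) \<bullet> u" for u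
    by (simp only: inner_transpose_symmetric_mult)
  then show ?thesis
    using cone_unit_ball_bound_iff[of "sign_mat D ** X" "transpose X *v (D *v lam)"]
      cone_unit_ball_bound_iff[of "sign_mat D ** X" "- (transpose X *v (D *v lam))"]
    unfolding transpose_mult_symmetric[OF sym] abs_le_iff by auto
qed

lemma convex_KKT_imp_arrangement_bound:
  assumes "convex_KKT X y u u' z z' lam" and "D \<in> arrangements X"
  shows "\<forall>v. norm v \<le> 1 \<and> (\<forall>n. 0 \<le> (sign_mat D ** X *v v) $ n) \<longrightarrow> \<bar>lam \<bullet> ((D ** X) *v v)\<bar> \<le> 1"
proof -
  have "(\<forall>n. 0 \<le> z' D $ n)
      \<and> norm (transpose X *v (D *v lam) + transpose X *v (sign_mat D *v z' D)) \<le> 1"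
    and "(\<forall>n. 0 \<le> z D $ n)
      \<and> norm (- (transpose X *v (D *v lam)) + transpose X *v (sign_mat D *v z D)) \<le> 1"
    using assms unfolding convex_KKT_def Let_def subdiff_norm_iff by blast+
  then show ?thesis
    unfolding arrangement_bound_iff_dual_certificate[OF assms(2)] by blast
qed

lemma sum_arrangements_activation_groups:
  fixes X :: "real^'d^'n" and W :: "real^'m^'d"
  shows "(\<Sum>D\<in>arrangements X. (D ** X) *v
            (\<Sum>i\<in>{i. activation_pattern X (column i W) = D}. w $ i *\<^sub>R column i W))
         = relu_mat (X ** W) *v w"
proof -
  have "(\<Sum>D\<in>arrangements X. (D ** X) *v
            (\<Sum>i\<in>{i. activation_pattern X (column i W) = D}. w $ i *\<^sub>R column i W))
      = (\<Sum>D\<in>arrangements X. \<Sum>i\<in>{i\<in>UNIV. activation_pattern X (column i W) = D}.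
            w $ i *\<^sub>R relu_vec (X *v column i W))"
    by (auto simp: vec.sum matrix_vector_mult_scaleR activation_pattern_mult_eq_relu
        intro!: sum.cong)
  also have "\<dots> = (\<Sum>i\<in>UNIV. w $ i *\<^sub>R relu_vec (X *v column i W))"
    using finite_arrangements[of X] by (intro sum.group) (auto simp: arrangements_eq_range)
  finally show ?thesis
    by (simp add: relu_mat_mult_vec_eq_sum)
qed

lemma activation_group_convex_KKT:
  fixes X :: "real^'d^'n" and W1 :: "real^'m^'d"
  assumes kkt: "nonconvex_KKT X y W1 w2 lam" and \<sigma>: "\<sigma> \<in> {-1, 1}" and D: "D \<in> arrangements X"
    and z: "\<forall>n. 0 \<le> z $ n"
    and z_cert: "norm (\<sigma> *\<^sub>R (transpose X *v (D *v lam)) + transpose X *v (sign_mat D *v z)) \<le> 1"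
  defines "u \<equiv> \<Sum>i\<in>{i. activation_pattern X (column i W1) = D \<and> 0 < \<sigma> * w2 $ i}.
                 (\<sigma> * w2 $ i) *\<^sub>R column i W1"
  shows "\<sigma> *\<^sub>R (transpose X *v (D *v lam)) + transpose X *v (sign_mat D *v z) \<in> subdiff norm u"
    and "\<forall>n. 0 \<le> (sign_mat D ** X *v u) $ n"
    and "\<forall>n. z $ n * (sign_mat D ** X *v u) $ n = 0"
proof -
  let ?I = "{i. activation_pattern X (column i W1) = D \<and> 0 < \<sigma> * w2 $ i}"
  have sym: "transpose (sign_mat D) = sign_mat D"
    using transpose_arrangement[OF D] by simp
  have "(\<sigma> *\<^sub>R (transpose X *v (D *v lam))) \<bullet> column i W1 = norm (column i W1)" if "i \<in> ?I" for i
  proof -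
    have "w2 $ i = lam \<bullet> relu_vec (X *v column i W1)"
      using kkt transpose_relu_mat_mult_component[of X W1 lam i] by (simp add: nonconvex_KKT_def)
    moreover have "\<bar>\<sigma> * w2 $ i\<bar> = \<sigma> * w2 $ i" using that by simp
    ultimately show ?thesis
      using that \<sigma> inner_activation_pattern_mult[of X "column i W1" lam]
      by (auto simp: nonconvex_KKT_norm_column[OF kkt] abs_mult)
  qed
  moreover have "\<forall>n. 0 \<le> (sign_mat D ** X *v column i W1) $ n" if "i \<in> ?I" for i
    using that activation_pattern_cone[of X "column i W1"] by auto
  ultimately show "\<sigma> *\<^sub>R (transpose X *v (D *v lam)) + transpose X *v (sign_mat D *v z) \<in> subdiff norm u"
    and "\<forall>n. 0 \<le> (sign_mat D ** X *v u) $ n"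
    and "\<forall>n. z $ n * (sign_mat D ** X *v u) $ n = 0"
    using cone_combination_KKT[of ?I _ "sign_mat D ** X" z, OF _ _ z]
      z_cert unfolding u_def transpose_mult_symmetric[OF sym] by auto
qed

lemma nonconvex_KKT_imp_convex_KKT:
  fixes X :: "real^'d^'n" and W1 :: "real^'m^'d"
  assumes kkt: "nonconvex_KKT X y W1 w2 lam"
    and bounds: "\<forall>D\<in>arrangements X. \<forall>u. norm u \<le> 1 \<and> (\<forall>n. 0 \<le> (sign_mat D ** X *v u) $ n)
                   \<longrightarrow> \<bar>lam \<bullet> ((D ** X) *v u)\<bar> \<le> 1"
  shows "\<exists>u u' z z'. (\<Sum>D\<in>arrangements X. (D ** X) *v (u' D - u D)) = relu_mat (X ** W1) *v w2
           \<and> convex_KKT X y u u' z z' lam"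
proof -
  let ?P = "arrangements X"
  obtain zP zM where
    zP: "\<forall>D\<in>?P. (\<forall>n. 0 \<le> zP D $ n)
           \<and> norm (transpose X *v (D *v lam) + transpose X *v (sign_mat D *v zP D)) \<le> 1" and
    zM: "\<forall>D\<in>?P. (\<forall>n. 0 \<le> zM D $ n)
           \<and> norm (- (transpose X *v (D *v lam)) + transpose X *v (sign_mat D *v zM D)) \<le> 1"
    using bounds arrangement_bound_iff_dual_certificate[of _ X lam] by metis
  define u where "u \<sigma> D = (\<Sum>i\<in>{i. activation_pattern X (column i W1) = D \<and> 0 < \<sigma> * w2 $ i}.
                 (\<sigma> * w2 $ i) *\<^sub>R column i W1)" for \<sigma> :: real and D
  have pos: "transpose X *v (D *v lam) + transpose X *v (sign_mat D *v zP D) \<in> subdiff norm (u 1 D)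
      \<and> (\<forall>n. 0 \<le> (sign_mat D ** X *v u 1 D) $ n) \<and> (\<forall>n. zP D $ n * (sign_mat D ** X *v u 1 D) $ n = 0)"
    if "D \<in> ?P" for D
    using activation_group_convex_KKT[OF kkt _ that, of 1 "zP D"] zP that by (simp add: u_def)
  have neg: "- (transpose X *v (D *v lam)) + transpose X *v (sign_mat D *v zM D) \<in> subdiff norm (u (-1) D)
      \<and> (\<forall>n. 0 \<le> (sign_mat D ** X *v u (-1) D) $ n) \<and> (\<forall>n. zM D $ n * (sign_mat D ** X *v u (-1) D) $ n = 0)"
    if "D \<in> ?P" for D
    using activation_group_convex_KKT[OF kkt _ that, of "-1" "zM D"] zM that by (simp add: u_def)
  have "u \<sigma> D = (\<Sum>i\<in>{i. activation_pattern X (column i W1) = D}.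
                 if 0 < \<sigma> * w2 $ i then (\<sigma> * w2 $ i) *\<^sub>R column i W1 else 0)" for \<sigma> D
    unfolding u_def by (subst sum.inter_filter[symmetric]) simp_all
  then have "u 1 D - u (-1) D = (\<Sum>i\<in>{i. activation_pattern X (column i W1) = D}. w2 $ i *\<^sub>R column i W1)"
    for D
    by (simp add: sum_subtractf[symmetric]) (intro sum.cong; auto)
  then have out: "(\<Sum>D\<in>?P. (D ** X) *v (u 1 D - u (-1) D)) = relu_mat (X ** W1) *v w2"
    by (simp add: sum_arrangements_activation_groups)
  have "\<forall>n. lam $ n * (y $ n * (relu_mat (X ** W1) *v w2) $ n - 1) = 0"
    using kkt unfolding nonconvex_KKT_def matrix_vector_mul_component by blast
  then have "convex_KKT X y (u (-1)) (u 1) zM zP lam"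
    using kkt pos neg zP zM unfolding convex_KKT_def nonconvex_KKT_def Let_def out by blast
  with out show ?thesis by blast
qed

theorem theorem3:
  fixes X :: "real^'d^'n" and y :: "real^'n" and W1 :: "real^'m^'d"
    and w2 :: "real^'m" and lam :: "real^'n"
  assumes y_pm: "\<forall>n. y $ n \<in> {-1, 1}"
    and kkt: "nonconvex_KKT X y W1 w2 lam"
  shows "((\<exists>u u' z z'.
             (\<Sum>D\<in>arrangements X. (D ** X) *v (u' D - u D)) = relu_mat (X ** W1) *v w2
           \<and> convex_KKT X y u u' z z' lam)
          \<longleftrightarrow> (\<forall>u. norm u \<le> 1 \<longrightarrow> \<bar>lam \<bullet> relu_vec (X *v u)\<bar> \<le> 1))
       \<and> ((\<forall>u. norm u \<le> 1 \<longrightarrow> \<bar>lam \<bullet> relu_vec (X *v u)\<bar> \<le> 1)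
          \<longleftrightarrow> (\<forall>D\<in>arrangements X. \<forall>u. norm u \<le> 1
                 \<and> (\<forall>n. (((2::real) *\<^sub>R D - mat 1) ** X *v u) $ n \<ge> 0)
                 \<longrightarrow> \<bar>lam \<bullet> ((D ** X) *v u)\<bar> \<le> 1))"
proof -
  have "(\<exists>u u' z z'.
             (\<Sum>D\<in>arrangements X. (D ** X) *v (u' D - u D)) = relu_mat (X ** W1) *v w2
           \<and> convex_KKT X y u u' z z' lam)
      \<longleftrightarrow> (\<forall>D\<in>arrangements X. \<forall>u. norm u \<le> 1 \<and> (\<forall>n. 0 \<le> (sign_mat D ** X *v u) $ n)
            \<longrightarrow> \<bar>lam \<bullet> ((D ** X) *v u)\<bar> \<le> 1)"
    using nonconvex_KKT_imp_convex_KKT[OF kkt] convex_KKT_imp_arrangement_bound by blast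
  then show ?thesis
    using dual_feasible_iff_arrangement_bounds by auto
qed

end
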